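(* Every Lindelöf space is selectively star-ccc. More generally, for each $k\in\mathbb{N}^+$, every $k$-star-Lindelöf space is selectively $(k+1)$-star-ccc.
   Context: No separation axioms are assumed; $\mathbb{N}^+$ is the set of positive integers. For $B\subseteq X$ and a family $\mathcal{U}$ of subsets of $X$: $\operatorname{st}^1(B,\mathcal{U})=\bigcup\{U\in\mathcal{U}:U\cap B\neq\emptyset\}$ and $\operatorname{st}^{n+1}(B,\mathcal{U})=\bigcup\{U\in\mathcal{U}:U\cap\operatorname{st}^n(B,\mathcal{U})\neq\emptyset\}$. A space $X$ is $k$-star-Lindelöf if for every open cover $\mathcal{U}$ there is a countable $\mathcal{V}\subseteq\mathcal{U}$ with $\operatorname{st}^k(\bigcup\mathcal{V},\mathcal{U})=X$. A space $X$ is selectively $k$-star-ccc if for every open cover $\mathcal{U}$ of $X$ and every sequence $(\mathcal{A}_n:n\in\omega)$ of maximal pairwise disjoint families of open subsets of $X$, there is a sequence $(A_n\in\mathcal{A}_n:n\in\omega)$ with $\operatorname{st}^k(\bigcup_{n\in\omega}A_n,\mathcal{U})=X$; selectively star-ccc means selectively $1$-star-ccc. *)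

theory Defs
  imports "HOL-Analysis.Analysis"
begin

text \<open>Iterated star. By convention st 0 B U = B, so that st 1 B U is the usual star
  of B with respect to U and st (n+1) B U = union of members of U meeting st n B U.\<close>
primrec st :: "nat \<Rightarrow> 'a set \<Rightarrow> 'a set set \<Rightarrow> 'a set" where
  "st 0 B \<U> = B"
| "st (Suc n) B \<U> = \<Union>{U \<in> \<U>. U \<inter> st n B \<U> \<noteq> {}}"

definition open_cover :: "'a topology \<Rightarrow> 'a set set \<Rightarrow> bool" where
  "open_cover X \<U> \<longleftrightarrow> (\<forall>U\<in>\<U>. openin X U) \<and> \<Union>\<U> = topspace X"

definition k_star_Lindelof :: "nat \<Rightarrow> 'a topology \<Rightarrow> bool" where
  "k_star_Lindelof k X \<longleftrightarrow>
     (\<forall>\<U>. open_cover X \<U> \<longrightarrow>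
        (\<exists>\<V>. \<V> \<subseteq> \<U> \<and> countable \<V> \<and> st k (\<Union>\<V>) \<U> = topspace X))"

definition disjoint_open_family :: "'a topology \<Rightarrow> 'a set set \<Rightarrow> bool" where
  "disjoint_open_family X \<A> \<longleftrightarrow> (\<forall>A\<in>\<A>. openin X A) \<and> pairwise disjnt \<A>"

definition maximal_disjoint_open_family :: "'a topology \<Rightarrow> 'a set set \<Rightarrow> bool" where
  "maximal_disjoint_open_family X \<A> \<longleftrightarrow>
     disjoint_open_family X \<A> \<and>
     (\<forall>\<B>. disjoint_open_family X \<B> \<and> \<A> \<subseteq> \<B> \<longrightarrow> \<B> = \<A>)"

definition selectively_k_star_ccc :: "nat \<Rightarrow> 'a topology \<Rightarrow> bool" where
  "selectively_k_star_ccc k X \<longleftrightarrow>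
     (\<forall>\<U> \<A>s. open_cover X \<U> \<and> (\<forall>n::nat. maximal_disjoint_open_family X (\<A>s n)) \<longrightarrow>
        (\<exists>A. (\<forall>n. A n \<in> \<A>s n) \<and> st k (\<Union>n. A n) \<U> = topspace X))"

definition selectively_star_ccc :: "'a topology \<Rightarrow> bool" where
  "selectively_star_ccc X \<longleftrightarrow> selectively_k_star_ccc 1 X"

end

theory Submission
  imports Defs
begin

text \<open>Given an open cover \<open>\<U>\<close>, a \<open>k\<close>-star-Lindelof space yields a countable
  \<open>\<V> \<subseteq> \<U>\<close> with \<open>st\<^sup>k(\<Union>\<V>, \<U>) = X\<close>. Enumerate \<open>\<V>\<close> as \<open>V\<^sub>0, V\<^sub>1, \<dots>\<close>; by maximality
  each \<open>\<A>\<^sub>n\<close> has a member \<open>A\<^sub>n\<close> meeting \<open>V\<^sub>n\<close> (if \<open>V\<^sub>n \<noteq> {}\<close>). Then every \<open>V\<^sub>n\<close> lies in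
  \<open>st(\<Union>\<^sub>n A\<^sub>n, \<U>)\<close>, hence \<open>st\<^sup>k\<^sup>+\<^sup>1(\<Union>\<^sub>n A\<^sub>n, \<U>) \<supseteq> st\<^sup>k(\<Union>\<V>, \<U>) = X\<close>.
  A Lindelof space is exactly the case \<open>k = 0\<close>.\<close>

lemma st_mono: "B \<subseteq> C \<Longrightarrow> st n B \<U> \<subseteq> st n C \<U>"
  by (induction n) auto

lemma st_Suc_eq_st_st1: "st (Suc n) B \<U> = st n (st 1 B \<U>) \<U>"
  by (induction n) simp_all

lemma st_Suc_subset_topspace: "open_cover X \<U> \<Longrightarrow> st (Suc n) B \<U> \<subseteq> topspace X"
  unfolding open_cover_def by auto

lemma Lindelof_space_imp_k_star_Lindelof_0:
  assumes "Lindelof_space X"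
  shows "k_star_Lindelof 0 X"
  unfolding k_star_Lindelof_def
proof (intro allI impI)
  fix \<U> assume "open_cover X \<U>"
  then have "\<exists>\<V>. countable \<V> \<and> \<V> \<subseteq> \<U> \<and> \<Union>\<V> = topspace X"
    using assms unfolding open_cover_def Lindelof_space_def by simp
  then show "\<exists>\<V>\<subseteq>\<U>. countable \<V> \<and> st 0 (\<Union>\<V>) \<U> = topspace X"
    by auto
qed

lemma maximal_disjoint_open_family_meets_open:
  assumes max: "maximal_disjoint_open_family X \<A>" and "openin X W"
  shows "\<exists>A\<in>\<A>. W \<noteq> {} \<longrightarrow> A \<inter> W \<noteq> {}"
proof (rule ccontr)
  assume "\<not> ?thesis"
  then have disj: "\<forall>A\<in>\<A>. W \<noteq> {} \<and> A \<inter> W = {}"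
    by blast
  then have "disjoint_open_family X (insert W \<A>)"
    using max \<open>openin X W\<close>
    unfolding maximal_disjoint_open_family_def disjoint_open_family_def pairwise_def disjnt_def
    by blast
  then have "W \<in> \<A>"
    using max unfolding maximal_disjoint_open_family_def by blast
  with disj show False
    by blast
qed

lemma maximal_disjoint_open_families_select_meeting:
  fixes \<A>s :: "nat \<Rightarrow> 'a set set"
  assumes max: "\<And>n. maximal_disjoint_open_family X (\<A>s n)"
    and opn: "\<And>V. V \<in> \<V> \<Longrightarrow> openin X V" and "countable \<V>"
  shows "\<exists>A. (\<forall>n. A n \<in> \<A>s n) \<and> (\<forall>V\<in>\<V>. V \<noteq> {} \<longrightarrow> (\<Union>n. A n) \<inter> V \<noteq> {})"
proof -
  \<comment> \<open>Adding \<open>{}\<close> makes the family nonempty, so it can be enumerated.\<close>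
  define W where "W = from_nat_into (insert {} \<V>)"
  have range_W: "range W = insert {} \<V>"
    using \<open>countable \<V>\<close> unfolding W_def by simp
  have "openin X (W n)" for n :: nat
    using range_W opn by (metis insertE openin_empty rangeI)
  then have "\<forall>n. \<exists>A\<in>\<A>s n. W n \<noteq> {} \<longrightarrow> A \<inter> W n \<noteq> {}"
    using maximal_disjoint_open_family_meets_open[OF max] by blast
  then obtain A where A: "\<And>n. A n \<in> \<A>s n" "\<And>n. W n \<noteq> {} \<Longrightarrow> A n \<inter> W n \<noteq> {}"
    by metis
  have "(\<Union>n. A n) \<inter> V \<noteq> {}" if "V \<in> \<V>" "V \<noteq> {}" for V
  proof -
    obtain n where "W n = V"
      using range_W \<open>V \<in> \<V>\<close> by (metis insertCI rangeE)
    then show ?thesis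
      using A(2)[of n] \<open>V \<noteq> {}\<close> by blast
  qed
  with A(1) show ?thesis
    by blast
qed

lemma k_star_Lindelof_imp_selectively_Suc_star_ccc:
  assumes "k_star_Lindelof k X"
  shows "selectively_k_star_ccc (Suc k) X"
  unfolding selectively_k_star_ccc_def
proof (intro allI impI, elim conjE)
  fix \<U> and \<A>s :: "nat \<Rightarrow> 'a set set"
  assume cover: "open_cover X \<U>" and max: "\<forall>n. maximal_disjoint_open_family X (\<A>s n)"
  obtain \<V> where "\<V> \<subseteq> \<U>" "countable \<V>" and star_\<V>: "st k (\<Union>\<V>) \<U> = topspace X"
    using assms cover unfolding k_star_Lindelof_def by blast
  moreover have "\<And>V. V \<in> \<V> \<Longrightarrow> openin X V"
    using \<open>\<V> \<subseteq> \<U>\<close> cover unfolding open_cover_def by blast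
  ultimately obtain A where A_in: "\<forall>n. A n \<in> \<A>s n"
      and meets: "\<forall>V\<in>\<V>. V \<noteq> {} \<longrightarrow> (\<Union>n. A n) \<inter> V \<noteq> {}"
    using maximal_disjoint_open_families_select_meeting[of X \<A>s \<V>] max by blast
  have "\<Union>\<V> \<subseteq> st 1 (\<Union>n. A n) \<U>"
  proof
    fix x
    assume "x \<in> \<Union>\<V>"
    then obtain V where "x \<in> V" "V \<in> \<V>"
      by blast
    with meets \<open>\<V> \<subseteq> \<U>\<close> show "x \<in> st 1 (\<Union>n. A n) \<U>"
      by (auto simp: Int_commute)
  qed
  then have "topspace X \<subseteq> st (Suc k) (\<Union>n. A n) \<U>"
    unfolding st_Suc_eq_st_st1 star_\<V>[symmetric] by (rule st_mono)
  with st_Suc_subset_topspace[OF cover] have "st (Suc k) (\<Union>n. A n) \<U> = topspace X"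
    by (rule subset_antisym)
  with A_in show "\<exists>A. (\<forall>n. A n \<in> \<A>s n) \<and> st (Suc k) (\<Union>n. A n) \<U> = topspace X"
    by blast
qed

theorem theorem3:
  shows "(\<forall>X :: 'a topology. Lindelof_space X \<longrightarrow> selectively_star_ccc X) \<and>
         (\<forall>(k::nat) (X :: 'a topology). k \<ge> 1 \<longrightarrow> k_star_Lindelof k X \<longrightarrow>
            selectively_k_star_ccc (k + 1) X)"
proof (intro conjI allI impI)
  fix X :: "'a topology"
  assume "Lindelof_space X"
  then show "selectively_star_ccc X"
    unfolding selectively_star_ccc_def One_nat_def
    by (intro k_star_Lindelof_imp_selectively_Suc_star_ccc Lindelof_space_imp_k_star_Lindelof_0)
next
  fix k :: nat and X :: "'a topology"
  assume "1 \<le> k" and "k_star_Lindelof k X"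
  then show "selectively_k_star_ccc (k + 1) X"
    by (simp add: k_star_Lindelof_imp_selectively_Suc_star_ccc)
qed

end
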